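(* Let $G$ and $H$ be connected graphs. If $\mu_t(G)=|\mathcal{S}(G)|$ or $\mu_t(H)=|\mathcal{S}(H)|$, then $$\mu_t(G\,\Box\,H)\le \mu_t(G)\,\mu_t(H).$$
   Context: All graphs are finite, simple and undirected. The Cartesian product $G\,\Box\,H$ has vertex set $V(G)\times V(H)$, with $(x,y)$ adjacent to $(x',y')$ iff either $x=x'$ and $yy'\in E(H)$, or $xx'\in E(G)$ and $y=y'$. Let $F$ be a connected graph and $X\subseteq V(F)$. Two vertices $x,y\in V(F)$ are $X$-visible if there exists a shortest $x,y$-path in $F$ none of whose internal vertices belongs to $X$. $X$ is a total mutual-visibility set of $F$ if every two vertices of $F$ are $X$-visible (the empty set is allowed). $\mu_t(F)$ is the maximum cardinality of a total mutual-visibility set of $F$. A vertex is simplicial if its neighbors induce a complete graph; $\mathcal{S}(F)$ is the set of simplicial vertices of $F$. *)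

theory Defs
  imports Main
begin

definition graph :: "'a set \<Rightarrow> ('a \<Rightarrow> 'a \<Rightarrow> bool) \<Rightarrow> bool" where
  "graph V E \<longleftrightarrow> finite V \<and> V \<noteq> {} \<and> (\<forall>x y. E x y \<longrightarrow> x \<in> V \<and> y \<in> V)
     \<and> (\<forall>x y. E x y \<longrightarrow> E y x) \<and> (\<forall>x. \<not> E x x)"

definition walk :: "'a set \<Rightarrow> ('a \<Rightarrow> 'a \<Rightarrow> bool) \<Rightarrow> 'a list \<Rightarrow> bool" where
  "walk V E p \<longleftrightarrow> p \<noteq> [] \<and> set p \<subseteq> V \<and> (\<forall>i. Suc i < length p \<longrightarrow> E (p ! i) (p ! Suc i))"

definition walk_betw :: "'a set \<Rightarrow> ('a \<Rightarrow> 'a \<Rightarrow> bool) \<Rightarrow> 'a \<Rightarrow> 'a list \<Rightarrow> 'a \<Rightarrow> bool" where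
  "walk_betw V E x p y \<longleftrightarrow> walk V E p \<and> hd p = x \<and> last p = y"

definition connected_graph :: "'a set \<Rightarrow> ('a \<Rightarrow> 'a \<Rightarrow> bool) \<Rightarrow> bool" where
  "connected_graph V E \<longleftrightarrow> graph V E \<and> (\<forall>x\<in>V. \<forall>y\<in>V. \<exists>p. walk_betw V E x p y)"

definition dist :: "'a set \<Rightarrow> ('a \<Rightarrow> 'a \<Rightarrow> bool) \<Rightarrow> 'a \<Rightarrow> 'a \<Rightarrow> nat" where
  "dist V E x y = (LEAST n. \<exists>p. walk_betw V E x p y \<and> length p = Suc n)"

text \<open>Shortest x,y-paths (a walk of minimum length is automatically a path).\<close>
definition shortest_path :: "'a set \<Rightarrow> ('a \<Rightarrow> 'a \<Rightarrow> bool) \<Rightarrow> 'a \<Rightarrow> 'a list \<Rightarrow> 'a \<Rightarrow> bool" where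
  "shortest_path V E x p y \<longleftrightarrow> walk_betw V E x p y \<and> length p = Suc (dist V E x y)"

definition internal :: "'a list \<Rightarrow> 'a set" where
  "internal p = set (butlast (tl p))"

definition X_visible :: "'a set \<Rightarrow> ('a \<Rightarrow> 'a \<Rightarrow> bool) \<Rightarrow> 'a set \<Rightarrow> 'a \<Rightarrow> 'a \<Rightarrow> bool" where
  "X_visible V E X x y \<longleftrightarrow> (\<exists>p. shortest_path V E x p y \<and> internal p \<inter> X = {})"

definition total_mutual_visibility_set :: "'a set \<Rightarrow> ('a \<Rightarrow> 'a \<Rightarrow> bool) \<Rightarrow> 'a set \<Rightarrow> bool" where
  "total_mutual_visibility_set V E X \<longleftrightarrow> X \<subseteq> V \<and> (\<forall>x\<in>V. \<forall>y\<in>V. X_visible V E X x y)"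

definition mu_t :: "'a set \<Rightarrow> ('a \<Rightarrow> 'a \<Rightarrow> bool) \<Rightarrow> nat" where
  "mu_t V E = Max (card ` {X. total_mutual_visibility_set V E X})"

definition simplicial :: "'a set \<Rightarrow> ('a \<Rightarrow> 'a \<Rightarrow> bool) \<Rightarrow> 'a \<Rightarrow> bool" where
  "simplicial V E v \<longleftrightarrow> v \<in> V \<and> (\<forall>x y. E v x \<and> E v y \<and> x \<noteq> y \<longrightarrow> E x y)"

definition simplicial_set :: "'a set \<Rightarrow> ('a \<Rightarrow> 'a \<Rightarrow> bool) \<Rightarrow> 'a set" where
  "simplicial_set V E = {v. simplicial V E v}"

definition cart_edges :: "('a \<Rightarrow> 'a \<Rightarrow> bool) \<Rightarrow> ('b \<Rightarrow> 'b \<Rightarrow> bool) \<Rightarrow> 'a \<times> 'b \<Rightarrow> 'a \<times> 'b \<Rightarrow> bool" where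
  "cart_edges EG EH u w \<longleftrightarrow>
     (fst u = fst w \<and> EH (snd u) (snd w)) \<or> (EG (fst u) (fst w) \<and> snd u = snd w)"

end

theory Submission
  imports Defs
begin

text \<open>A simplicial vertex is never an internal vertex of a shortest path, so adding all
  simplicial vertices to a total mutual-visibility set yields another one; hence, if
  mu_t(G) = |S(G)|, every total mutual-visibility set of G lies inside S(G).
  In G \<box> H a shortest path between two vertices of a layer G \<times> {h} stays in that layer, so
  every layer of a total mutual-visibility set X of G \<box> H is a total mutual-visibility set of
  the corresponding factor. Thus X projects into S(G), and each of its fibres over S(G) has at
  most mu_t(H) vertices: |X| \<le> |S(G)| mu_t(H) = mu_t(G) mu_t(H). The case mu_t(H) = |S(H)|
  follows by commutativity of the Cartesian product.\<close>

lemma walk_Cons_Cons: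
  "walk V E (a # b # p) \<longleftrightarrow> a \<in> V \<and> E a b \<and> walk V E (b # p)"
  by (auto simp: walk_def less_Suc_eq_0_disj)

lemma walk_singleton [simp]: "walk V E [a] \<longleftrightarrow> a \<in> V"
  by (simp add: walk_def)

lemma walk_append:
  assumes "xs \<noteq> []" "ys \<noteq> []"
  shows "walk V E (xs @ ys) \<longleftrightarrow> walk V E xs \<and> walk V E ys \<and> E (last xs) (hd ys)"
  using assms(1)
proof (induction xs rule: induct_list012)
  case (2 a)
  with assms(2) show ?case by (cases ys) (auto simp: walk_Cons_Cons)
qed (auto simp: walk_Cons_Cons)

lemma walk_betw_append_tl:
  assumes "walk_betw V E x p y" "walk_betw V E y q z"
  shows "walk_betw V E x (p @ tl q) z"
proof -
  obtain q' where q: "q = y # q'" using assms(2) by (cases q) (auto simp: walk_betw_def walk_def)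
  have "p \<noteq> []" using assms(1) by (auto simp: walk_betw_def walk_def)
  show ?thesis
  proof (cases q')
    case Nil
    with q assms show ?thesis by (simp add: walk_betw_def)
  next
    case (Cons b r)
    with q assms \<open>p \<noteq> []\<close> show ?thesis by (simp add: walk_betw_def walk_append walk_Cons_Cons)
  qed
qed

lemma dist_less_length: "walk_betw V E x p y \<Longrightarrow> dist V E x y < length p"
proof -
  assume p: "walk_betw V E x p y"
  then obtain n where n: "length p = Suc n" by (cases p) (auto simp: walk_betw_def walk_def)
  with p have "dist V E x y \<le> n" unfolding dist_def by (blast intro: Least_le)
  with n show ?thesis by simp
qed

lemma shortest_path_exists: "walk_betw V E x p y \<Longrightarrow> \<exists>q. shortest_path V E x q y"
proof -
  assume p: "walk_betw V E x p y"
  then obtain n where "length p = Suc n" by (cases p) (auto simp: walk_betw_def walk_def)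
  with p have "\<exists>n q. walk_betw V E x q y \<and> length q = Suc n" by blast
  then have "\<exists>q. walk_betw V E x q y \<and> length q = Suc (dist V E x y)"
    unfolding dist_def by (rule LeastI_ex)
  then show ?thesis by (simp add: shortest_path_def)
qed

lemma internal_subset_set: "internal p \<subseteq> set p"
  by (cases p) (auto simp: internal_def dest: in_set_butlastD)

lemma internal_map: "internal (map f p) = f ` internal p"
  by (simp add: internal_def map_tl[symmetric] map_butlast[symmetric])

lemma internal_obtain_split:
  assumes "v \<in> internal p"
  obtains xs ys where "p = xs @ v # ys" "xs \<noteq> []" "ys \<noteq> []"
proof -
  obtain a r where p: "p = a # r" using assms by (cases p) (auto simp: internal_def)
  with assms have "v \<in> set (butlast r)" by (simp add: internal_def)
  then obtain m1 m2 where "butlast r = m1 @ v # m2" by (meson split_list)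
  moreover have "r = butlast r @ [last r]"
    using \<open>v \<in> set (butlast r)\<close> by (cases r rule: rev_cases) auto
  ultimately have "p = (a # m1) @ v # (m2 @ [last r])" using p by (metis append_Cons append_assoc)
  then show ?thesis using that by blast
qed

text \<open>A shortest path through a simplicial vertex v could bypass v, either along the edge
  joining its two neighbours on the path or, if these coincide, by dropping the detour.\<close>
lemma simplicial_notin_internal:
  assumes "graph V E" "simplicial V E v" "shortest_path V E x p y"
  shows "v \<notin> internal p"
proof
  assume "v \<in> internal p"
  then obtain xs ys where p: "p = xs @ v # ys" and xs: "xs \<noteq> []" and ys: "ys \<noteq> []"
    by (rule internal_obtain_split)
  have "walk V E p" and ends: "hd xs = x" "last ys = y" and len: "length p = Suc (dist V E x y)"
    using assms(3) p xs ys by (auto simp: shortest_path_def walk_betw_def)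
  then have wxs: "walk V E xs" and "E (last xs) v" and "walk V E (v # ys)"
    using xs by (simp_all add: p walk_append)
  moreover obtain b ys' where "ys = b # ys'" using ys by (cases ys) auto
  ultimately have wys: "walk V E ys" and "E v (hd ys)" by (simp_all add: walk_Cons_Cons)
  have "E v (last xs)" using assms(1) \<open>E (last xs) v\<close> by (simp add: graph_def)
  have "\<exists>q. walk_betw V E x q y \<and> length q < length p"
  proof (cases "last xs = hd ys")
    case True
    have "walk_betw V E x xs (last xs)" "walk_betw V E (last xs) ys y"
      using wxs wys ends True by (simp_all add: walk_betw_def)
    then have "walk_betw V E x (xs @ tl ys) y" by (rule walk_betw_append_tl)
    then show ?thesis using p ys by (intro exI[of _ "xs @ tl ys"]) simp
  next
    case False
    then have "E (last xs) (hd ys)"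
      using assms(2) \<open>E v (last xs)\<close> \<open>E v (hd ys)\<close> unfolding simplicial_def by blast
    then have "walk_betw V E x (xs @ ys) y" using wxs wys xs ys ends by (simp add: walk_betw_def walk_append)
    then show ?thesis using p by auto
  qed
  then show False using dist_less_length len by fastforce
qed

lemma total_mutual_visibility_set_Un_simplicial_set:
  assumes "graph V E" "total_mutual_visibility_set V E X"
  shows "total_mutual_visibility_set V E (X \<union> simplicial_set V E)"
  unfolding total_mutual_visibility_set_def
proof (intro conjI ballI)
  show "X \<union> simplicial_set V E \<subseteq> V"
    using assms(2) by (auto simp: total_mutual_visibility_set_def simplicial_set_def simplicial_def)
  fix x y assume "x \<in> V" "y \<in> V"
  then obtain p where p: "shortest_path V E x p y" "internal p \<inter> X = {}"
    using assms(2) unfolding total_mutual_visibility_set_def X_visible_def by blast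
  moreover have "internal p \<inter> simplicial_set V E = {}"
    using simplicial_notin_internal[OF assms(1) _ p(1)] by (auto simp: simplicial_set_def)
  ultimately show "X_visible V E (X \<union> simplicial_set V E) x y"
    unfolding X_visible_def by blast
qed

lemma finite_total_mutual_visibility_sets:
  "finite V \<Longrightarrow> finite {X. total_mutual_visibility_set V E X}"
  by (rule finite_subset[of _ "Pow V"]) (auto simp: total_mutual_visibility_set_def)

lemma card_le_mu_t:
  "finite V \<Longrightarrow> total_mutual_visibility_set V E X \<Longrightarrow> card X \<le> mu_t V E"
  unfolding mu_t_def by (simp add: Max_ge finite_total_mutual_visibility_sets)

lemma empty_total_mutual_visibility_set:
  "\<forall>x\<in>V. \<forall>y\<in>V. \<exists>p. walk_betw V E x p y \<Longrightarrow> total_mutual_visibility_set V E {}"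
  unfolding total_mutual_visibility_set_def X_visible_def
  by simp (meson shortest_path_exists)

lemma mu_t_attained:
  assumes "finite V" "\<forall>x\<in>V. \<forall>y\<in>V. \<exists>p. walk_betw V E x p y"
  obtains X where "total_mutual_visibility_set V E X" "card X = mu_t V E"
proof -
  have "mu_t V E \<in> card ` {X. total_mutual_visibility_set V E X}"
    unfolding mu_t_def using empty_total_mutual_visibility_set[OF assms(2)] assms(1)
    by (intro Max_in) (auto simp: finite_total_mutual_visibility_sets)
  then show ?thesis using that by (auto simp del: mu_t_def)
qed

lemma total_mutual_visibility_set_subset_simplicial_set:
  assumes "graph V E" "mu_t V E = card (simplicial_set V E)" "total_mutual_visibility_set V E X"
  shows "X \<subseteq> simplicial_set V E"
proof -
  have fin: "finite V" using assms(1) by (simp add: graph_def)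
  have tmv: "total_mutual_visibility_set V E (X \<union> simplicial_set V E)"
    using assms(1,3) by (rule total_mutual_visibility_set_Un_simplicial_set)
  then have "finite (X \<union> simplicial_set V E)"
    using fin finite_subset unfolding total_mutual_visibility_set_def by blast
  moreover have "card (X \<union> simplicial_set V E) \<le> card (simplicial_set V E)"
    using card_le_mu_t[OF fin tmv] assms(2) by simp
  ultimately have "simplicial_set V E = X \<union> simplicial_set V E"
    by (intro card_subset_eq) (auto intro: le_antisym card_mono)
  then show ?thesis by blast
qed

lemma cart_edges_swap: "cart_edges EH EG (prod.swap u) (prod.swap w) = cart_edges EG EH u w"
  by (auto simp: cart_edges_def)

lemma walk_cart_swap:
  "walk (VH \<times> VG) (cart_edges EH EG) (map prod.swap p) \<longleftrightarrow> walk (VG \<times> VH) (cart_edges EG EH) p"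
  by (auto simp: walk_def cart_edges_swap)

lemma walk_betw_cart_swap:
  "walk_betw (VH \<times> VG) (cart_edges EH EG) (prod.swap x) (map prod.swap p) (prod.swap y)
    \<longleftrightarrow> walk_betw (VG \<times> VH) (cart_edges EG EH) x p y"
proof (cases "p = []")
  case False
  then show ?thesis by (simp add: walk_betw_def walk_cart_swap hd_map last_map inj_eq)
qed (simp add: walk_betw_def walk_def)

lemma dist_cart_swap:
  "dist (VH \<times> VG) (cart_edges EH EG) (prod.swap x) (prod.swap y) = dist (VG \<times> VH) (cart_edges EG EH) x y"
proof -
  have "(\<exists>p. walk_betw (VH \<times> VG) (cart_edges EH EG) (prod.swap x) p (prod.swap y) \<and> length p = n)
    \<longleftrightarrow> (\<exists>p. walk_betw (VG \<times> VH) (cart_edges EG EH) x p y \<and> length p = n)" for n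
  proof
    assume "\<exists>p. walk_betw (VH \<times> VG) (cart_edges EH EG) (prod.swap x) p (prod.swap y) \<and> length p = n"
    then obtain p where "walk_betw (VH \<times> VG) (cart_edges EH EG) (prod.swap x) p (prod.swap y)"
      and "length p = n" by blast
    then show "\<exists>p. walk_betw (VG \<times> VH) (cart_edges EG EH) x p y \<and> length p = n"
      using walk_betw_cart_swap[of VH VG EH EG x "map prod.swap p" y]
      by (intro exI[of _ "map prod.swap p"]) simp
  qed (use walk_betw_cart_swap in fastforce)
  then show ?thesis by (simp add: dist_def)
qed

lemma shortest_path_cart_swap:
  "shortest_path (VH \<times> VG) (cart_edges EH EG) (prod.swap x) (map prod.swap p) (prod.swap y)
    \<longleftrightarrow> shortest_path (VG \<times> VH) (cart_edges EG EH) x p y"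
  by (simp add: shortest_path_def walk_betw_cart_swap dist_cart_swap)

lemma total_mutual_visibility_set_cart_swap:
  assumes "total_mutual_visibility_set (VG \<times> VH) (cart_edges EG EH) X"
  shows "total_mutual_visibility_set (VH \<times> VG) (cart_edges EH EG) (prod.swap ` X)"
  unfolding total_mutual_visibility_set_def
proof (intro conjI ballI)
  show "prod.swap ` X \<subseteq> VH \<times> VG"
    using assms by (auto simp: total_mutual_visibility_set_def)
  fix x y assume "x \<in> VH \<times> VG" "y \<in> VH \<times> VG"
  then have "X_visible (VG \<times> VH) (cart_edges EG EH) X (prod.swap x) (prod.swap y)"
    using assms by (auto simp: total_mutual_visibility_set_def)
  then obtain p where p: "shortest_path (VG \<times> VH) (cart_edges EG EH) (prod.swap x) p (prod.swap y)"
    and "internal p \<inter> X = {}"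
    unfolding X_visible_def by blast
  then have "internal (map prod.swap p) \<inter> prod.swap ` X = {}"
    by (simp add: internal_map flip: image_Int)
  moreover have "shortest_path (VH \<times> VG) (cart_edges EH EG) x (map prod.swap p) y"
    using p shortest_path_cart_swap[of VH VG EH EG "prod.swap x" p "prod.swap y"] by (simp only: swap_swap)
  ultimately show "X_visible (VH \<times> VG) (cart_edges EH EG) (prod.swap ` X) x y"
    unfolding X_visible_def by blast
qed

lemma walk_betw_cart_lift_fst:
  "walk_betw VG EG u p v \<Longrightarrow> h \<in> VH
    \<Longrightarrow> walk_betw (VG \<times> VH) (cart_edges EG EH) (u, h) (map (\<lambda>g. (g, h)) p) (v, h)"
  unfolding walk_betw_def walk_def cart_edges_def by (auto simp: hd_map last_map)

lemma walk_betw_cart_lift_snd: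
  "walk_betw VH EH u p v \<Longrightarrow> g \<in> VG
    \<Longrightarrow> walk_betw (VG \<times> VH) (cart_edges EG EH) (g, u) (map (\<lambda>h. (g, h)) p) (g, v)"
  unfolding walk_betw_def walk_def cart_edges_def by (auto simp: hd_map last_map)

lemma walk_betw_cart_exists:
  assumes "connected_graph VG EG" "connected_graph VH EH"
  shows "\<forall>x\<in>VG \<times> VH. \<forall>y\<in>VG \<times> VH. \<exists>p. walk_betw (VG \<times> VH) (cart_edges EG EH) x p y"
proof (intro ballI)
  fix x y assume xy: "x \<in> VG \<times> VH" "y \<in> VG \<times> VH"
  then obtain pG pH where "walk_betw VG EG (fst x) pG (fst y)" "walk_betw VH EH (snd x) pH (snd y)"
    using assms unfolding connected_graph_def mem_Times_iff by blast
  then have "walk_betw (VG \<times> VH) (cart_edges EG EH) (fst x, snd x) (map (\<lambda>g. (g, snd x)) pG) (fst y, snd x)"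
    and "walk_betw (VG \<times> VH) (cart_edges EG EH) (fst y, snd x) (map (\<lambda>h. (fst y, h)) pH) (fst y, snd y)"
    using xy by (auto intro: walk_betw_cart_lift_fst walk_betw_cart_lift_snd)
  then show "\<exists>p. walk_betw (VG \<times> VH) (cart_edges EG EH) x p y"
    by (auto intro: walk_betw_append_tl)
qed

lemma mu_t_cart_le_mu_t_cart_swap:
  assumes "connected_graph VG EG" "connected_graph VH EH"
  shows "mu_t (VG \<times> VH) (cart_edges EG EH) \<le> mu_t (VH \<times> VG) (cart_edges EH EG)"
proof -
  have fin: "finite (VG \<times> VH)" "finite (VH \<times> VG)"
    using assms by (simp_all add: connected_graph_def graph_def)
  obtain X where X: "total_mutual_visibility_set (VG \<times> VH) (cart_edges EG EH) X"
    and card_X: "card X = mu_t (VG \<times> VH) (cart_edges EG EH)"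
    using mu_t_attained[OF fin(1) walk_betw_cart_exists[OF assms]] .
  have "mu_t (VG \<times> VH) (cart_edges EG EH) = card (prod.swap ` X)"
    using card_X by (simp add: card_image)
  also have "\<dots> \<le> mu_t (VH \<times> VG) (cart_edges EH EG)"
    using fin(2) total_mutual_visibility_set_cart_swap[OF X] by (rule card_le_mu_t)
  finally show ?thesis .
qed

text \<open>The projection drops the steps of q taken along the second factor.\<close>
lemma walk_cart_project_fst:
  assumes "walk (VG \<times> VH) (cart_edges EG EH) q"
  obtains p where "walk_betw VG EG (fst (hd q)) p (fst (last q))" "length p \<le> length q"
    "(\<exists>x\<in>set q. snd x \<noteq> snd (hd q)) \<Longrightarrow> length p < length q"
  using assms
proof (induction q arbitrary: thesis rule: induct_list012)
  case (2 a)
  then show ?case by (intro "2.prems"(1)[of "[fst a]"]) (auto simp: walk_betw_def)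
next
  case (3 a b q)
  have edge: "cart_edges EG EH a b" and "fst a \<in> VG" and "walk (VG \<times> VH) (cart_edges EG EH) (b # q)"
    using "3.prems"(2) by (auto simp: walk_Cons_Cons)
  then obtain p where p: "walk_betw VG EG (fst b) p (fst (last (b # q)))" "length p \<le> length (b # q)"
    "(\<exists>x\<in>set (b # q). snd x \<noteq> snd b) \<Longrightarrow> length p < length (b # q)"
    using "3.IH"(2) by (metis list.sel(1))
  show ?case
  proof (cases "fst a = fst b")
    case True
    with p show ?thesis by (intro "3.prems"(1)[of p]) auto
  next
    case False
    with edge have "EG (fst a) (fst b)" "snd a = snd b" by (auto simp: cart_edges_def)
    moreover have "p = fst b # tl p" using p(1) by (cases p) (auto simp: walk_betw_def walk_def)
    ultimately have "walk_betw VG EG (fst a) (fst a # p) (fst (last (a # b # q)))"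
      using p(1) \<open>fst a \<in> VG\<close> by (metis walk_Cons_Cons walk_betw_def last_ConsR list.distinct(1) list.sel(1))
    with p \<open>snd a = snd b\<close> show ?thesis by (intro "3.prems"(1)[of "fst a # p"]) auto
  qed
qed (simp add: walk_def)

lemma walk_cart_layer_fst:
  assumes "walk (VG \<times> VH) (cart_edges EG EH) q" "\<forall>x\<in>set q. snd x = h" "\<not> EH h h"
  shows "walk VG EG (map fst q)"
  unfolding walk_def
proof (intro conjI allI impI)
  show "map fst q \<noteq> []" "set (map fst q) \<subseteq> VG" using assms(1) by (auto simp: walk_def)
  fix i assume i: "Suc i < length (map fst q)"
  then have "cart_edges EG EH (q ! i) (q ! Suc i)" using assms(1) by (simp add: walk_def)
  moreover have "snd (q ! i) = h" "snd (q ! Suc i) = h" using assms(2) i by simp_all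
  ultimately show "EG (map fst q ! i) (map fst q ! Suc i)"
    using assms(3) i by (auto simp: cart_edges_def)
qed

text \<open>Lifting a shortest path of G into the layer and projecting q back to G bound each of
  the two distances by the other, so the projection of q loses no step.\<close>
lemma shortest_path_cart_same_layer:
  assumes "graph VH EH" "h \<in> VH" "shortest_path (VG \<times> VH) (cart_edges EG EH) (u, h) q (v, h)"
  shows "\<forall>x\<in>set q. snd x = h" and "shortest_path VG EG u (map fst q) v"
proof -
  have wq: "walk (VG \<times> VH) (cart_edges EG EH) q" and ends: "hd q = (u, h)" "last q = (v, h)"
    and len_q: "length q = Suc (dist (VG \<times> VH) (cart_edges EG EH) (u, h) (v, h))"
    using assms(3) by (simp_all add: shortest_path_def walk_betw_def)
  obtain p where p: "walk_betw VG EG u p v" "length p \<le> length q"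
    "(\<exists>x\<in>set q. snd x \<noteq> h) \<Longrightarrow> length p < length q"
    using walk_cart_project_fst[OF wq] ends by (metis fst_conv snd_conv)
  obtain pG where pG: "shortest_path VG EG u pG v" using shortest_path_exists[OF p(1)] by blast
  then have "walk_betw (VG \<times> VH) (cart_edges EG EH) (u, h) (map (\<lambda>g. (g, h)) pG) (v, h)"
    using assms(2) by (simp add: shortest_path_def walk_betw_cart_lift_fst)
  then have "dist (VG \<times> VH) (cart_edges EG EH) (u, h) (v, h) < Suc (dist VG EG u v)"
    using dist_less_length pG by (fastforce simp: shortest_path_def)
  moreover have "dist VG EG u v < length p" using p(1) by (rule dist_less_length)
  ultimately have len_p: "length p = length q" and len_map: "length (map fst q) = Suc (dist VG EG u v)"
    using p(2) len_q by simp_all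
  show layer: "\<forall>x\<in>set q. snd x = h" using p(3) len_p by auto
  have "\<not> EH h h" using assms(1) by (simp add: graph_def)
  with wq layer have "walk VG EG (map fst q)" by (rule walk_cart_layer_fst)
  with ends len_map show "shortest_path VG EG u (map fst q) v"
    using wq by (auto simp: shortest_path_def walk_betw_def walk_def hd_map last_map)
qed

lemma total_mutual_visibility_set_cart_layer_fst:
  assumes "graph VH EH" "total_mutual_visibility_set (VG \<times> VH) (cart_edges EG EH) X" "h \<in> VH"
  shows "total_mutual_visibility_set VG EG {g. (g, h) \<in> X}"
  unfolding total_mutual_visibility_set_def
proof (intro conjI ballI)
  show "{g. (g, h) \<in> X} \<subseteq> VG" using assms(2) by (auto simp: total_mutual_visibility_set_def)
  fix u v assume "u \<in> VG" "v \<in> VG"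
  then have "X_visible (VG \<times> VH) (cart_edges EG EH) X (u, h) (v, h)"
    using assms(2,3) by (simp add: total_mutual_visibility_set_def)
  then obtain q where q: "shortest_path (VG \<times> VH) (cart_edges EG EH) (u, h) q (v, h)"
    and avoids: "internal q \<inter> X = {}" unfolding X_visible_def by blast
  have "\<forall>x\<in>set q. snd x = h" using shortest_path_cart_same_layer(1)[OF assms(1,3) q] .
  then have "internal (map fst q) \<inter> {g. (g, h) \<in> X} = {}"
    using avoids internal_subset_set[of q] by (force simp: internal_map)
  then show "X_visible VG EG {g. (g, h) \<in> X} u v"
    using shortest_path_cart_same_layer(2)[OF assms(1,3) q] unfolding X_visible_def by blast
qed

lemma total_mutual_visibility_set_cart_layer_snd:
  assumes "graph VG EG" "total_mutual_visibility_set (VG \<times> VH) (cart_edges EG EH) X" "g \<in> VG"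
  shows "total_mutual_visibility_set VH EH {h. (g, h) \<in> X}"
  using total_mutual_visibility_set_cart_layer_fst[OF assms(1)
      total_mutual_visibility_set_cart_swap[OF assms(2)] assms(3)]
  by simp

lemma card_le_card_fst_image_mult:
  assumes "finite X" and "\<And>g. g \<in> fst ` X \<Longrightarrow> card {h. (g, h) \<in> X} \<le> m"
  shows "card X \<le> card (fst ` X) * m"
proof -
  have fibres: "X = Sigma (fst ` X) (\<lambda>g. {h. (g, h) \<in> X})" by force
  have "finite {h. (g, h) \<in> X}" for g
    using finite_imageI[OF assms(1), of snd] by (rule finite_subset[rotated]) force
  then have "card X = (\<Sum>g\<in>fst ` X. card {h. (g, h) \<in> X})"
    by (subst fibres) (simp add: assms(1))
  also have "\<dots> \<le> card (fst ` X) * m"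
    using sum_bounded_above[of "fst ` X" "\<lambda>g. card {h. (g, h) \<in> X}" m] assms(2) by simp
  finally show ?thesis .
qed

lemma mu_t_cart_le_if_mu_t_eq_simplicial:
  assumes cG: "connected_graph VG EG" and cH: "connected_graph VH EH"
    and eq: "mu_t VG EG = card (simplicial_set VG EG)"
  shows "mu_t (VG \<times> VH) (cart_edges EG EH) \<le> mu_t VG EG * mu_t VH EH"
proof -
  have gG: "graph VG EG" and gH: "graph VH EH" using cG cH by (simp_all add: connected_graph_def)
  then have finG: "finite VG" and finH: "finite VH" by (simp_all add: graph_def)
  obtain X where X: "total_mutual_visibility_set (VG \<times> VH) (cart_edges EG EH) X"
    and card_X: "card X = mu_t (VG \<times> VH) (cart_edges EG EH)"
    using mu_t_attained[OF _ walk_betw_cart_exists[OF cG cH]] finG finH by blast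
  have XV: "X \<subseteq> VG \<times> VH" using X by (simp add: total_mutual_visibility_set_def)
  have simplicial: "fst ` X \<subseteq> simplicial_set VG EG"
  proof
    fix g assume "g \<in> fst ` X"
    then obtain h where "(g, h) \<in> X" by force
    moreover have "{g'. (g', h) \<in> X} \<subseteq> simplicial_set VG EG"
      using total_mutual_visibility_set_subset_simplicial_set[OF gG eq
          total_mutual_visibility_set_cart_layer_fst[OF gH X]] \<open>(g, h) \<in> X\<close> XV by blast
    ultimately show "g \<in> simplicial_set VG EG" by blast
  qed
  have fibre: "card {h. (g, h) \<in> X} \<le> mu_t VH EH" if "g \<in> fst ` X" for g
    using card_le_mu_t[OF finH total_mutual_visibility_set_cart_layer_snd[OF gG X]] that XV by force
  have "finite X" using XV finG finH finite_subset by blast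
  then have "card X \<le> card (fst ` X) * mu_t VH EH"
    using fibre by (rule card_le_card_fst_image_mult)
  also have "\<dots> \<le> card (simplicial_set VG EG) * mu_t VH EH"
    using simplicial finG by (simp add: card_mono simplicial_set_def simplicial_def)
  finally show ?thesis using card_X eq by simp
qed

theorem theorem5p4:
  fixes VG :: "'a set" and EG :: "'a \<Rightarrow> 'a \<Rightarrow> bool"
    and VH :: "'b set" and EH :: "'b \<Rightarrow> 'b \<Rightarrow> bool"
  assumes "connected_graph VG EG" and "connected_graph VH EH"
    and "mu_t VG EG = card (simplicial_set VG EG) \<or> mu_t VH EH = card (simplicial_set VH EH)"
  shows "mu_t (VG \<times> VH) (cart_edges EG EH) \<le> mu_t VG EG * mu_t VH EH"
proof -
  from assms(3) consider "mu_t VG EG = card (simplicial_set VG EG)"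
    | "mu_t VH EH = card (simplicial_set VH EH)" by blast
  then show ?thesis
  proof cases
    case 1
    with assms(1,2) show ?thesis by (rule mu_t_cart_le_if_mu_t_eq_simplicial)
  next
    case 2
    have "mu_t (VG \<times> VH) (cart_edges EG EH) \<le> mu_t (VH \<times> VG) (cart_edges EH EG)"
      using assms(1,2) by (rule mu_t_cart_le_mu_t_cart_swap)
    also have "\<dots> \<le> mu_t VH EH * mu_t VG EG"
      using assms(2,1) 2 by (rule mu_t_cart_le_if_mu_t_eq_simplicial)
    finally show ?thesis by (simp add: mult.commute)
  qed
qed

end
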